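(* Let $f, g \in \mathrm{Inj}(\Omega)$ each have at least one infinite cycle. Then $f \approx_{\mathrm{fin}} g$ if and only if $f = hh_1gh_2h^{-1}$ for some $h \in \mathrm{Sym}(\Omega)$ and $h_1, h_2 \in \mathrm{Fin}(\Omega)$.
   Context: $\Omega$ is a countably infinite set; maps are written on the right and composed left to right. $\mathrm{Inj}(\Omega)$ is the monoid of injective maps $\Omega\to\Omega$, $\mathrm{Sym}(\Omega)$ the permutation group, $\mathrm{Fin}(\Omega)$ the permutations moving only finitely many points. For $f\in\mathrm{Inj}(\Omega)$, a cycle of $f$ is a nonempty $\Sigma\subseteq\Omega$ such that (a) for all $\alpha\in\Omega$, $(\alpha)f\in\Sigma$ iff $\alpha\in\Sigma$, and (b) no proper nonempty subset of $\Sigma$ satisfies (a). A forward cycle is an infinite cycle $\Sigma$ with $\Sigma\setminus(\Omega)f\ne\emptyset$; an open cycle is an infinite cycle that is not forward. For $n\in\mathbb{Z}_+$, $(f)\mathrm{C}_n$ is the cardinal number of cycles of $f$ of cardinality $n$; $(f)\mathrm{C}_{\mathrm{open}}$, $(f)\mathrm{C}_{\mathrm{fwd}}$ are the numbers of open and forward cycles. $f\approx_{\mathrm{fin}}g$ means: $(f)\mathrm{C}_{\mathrm{open}}=(g)\mathrm{C}_{\mathrm{open}}$; $(f)\mathrm{C}_{\mathrm{fwd}}=(g)\mathrm{C}_{\mathrm{fwd}}$; $(f)\mathrm{C}_n\ne(g)\mathrm{C}_n$ for only finitely many $n\in\mathbb{Z}_+$; and whenever $(f)\mathrm{C}_n\ne(g)\mathrm{C}_n$,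 both are finite. *)

theory Defs
  imports "HOL-Library.Countable_Set" "HOL-Library.Equipollence"
begin

text \<open>Maps are written on the right in the paper; here they are ordinary functions.
  A set S is invariant under f in the sense of condition (a).\<close>
definition closed_under :: "('a \<Rightarrow> 'a) \<Rightarrow> 'a set \<Rightarrow> bool" where
  "closed_under f S \<longleftrightarrow> (\<forall>a. f a \<in> S \<longleftrightarrow> a \<in> S)"

definition is_cycle :: "('a \<Rightarrow> 'a) \<Rightarrow> 'a set \<Rightarrow> bool" where
  "is_cycle f S \<longleftrightarrow> S \<noteq> {} \<and> closed_under f S \<and>
     (\<forall>T. T \<subset> S \<and> T \<noteq> {} \<longrightarrow> \<not> closed_under f T)"

definition forward_cycle :: "('a \<Rightarrow> 'a) \<Rightarrow> 'a set \<Rightarrow> bool" where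
  "forward_cycle f S \<longleftrightarrow> is_cycle f S \<and> infinite S \<and> S - range f \<noteq> {}"

definition open_cycle :: "('a \<Rightarrow> 'a) \<Rightarrow> 'a set \<Rightarrow> bool" where
  "open_cycle f S \<longleftrightarrow> is_cycle f S \<and> infinite S \<and> \<not> forward_cycle f S"

definition cycles_card :: "('a \<Rightarrow> 'a) \<Rightarrow> nat \<Rightarrow> 'a set set" where
  "cycles_card f n = {S. is_cycle f S \<and> finite S \<and> card S = n}"

definition approx_fin :: "('a \<Rightarrow> 'a) \<Rightarrow> ('a \<Rightarrow> 'a) \<Rightarrow> bool" where
  "approx_fin f g \<longleftrightarrow>
     ({S. open_cycle f S} \<approx> {S. open_cycle g S}) \<and>
     ({S. forward_cycle f S} \<approx> {S. forward_cycle g S}) \<and>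
     finite {n::nat. 0 < n \<and> \<not> (cycles_card f n \<approx> cycles_card g n)} \<and>
     (\<forall>n::nat. 0 < n \<and> \<not> (cycles_card f n \<approx> cycles_card g n) \<longrightarrow>
        finite (cycles_card f n) \<and> finite (cycles_card g n))"

definition fin_perm :: "('a \<Rightarrow> 'a) \<Rightarrow> bool" where
  "fin_perm h \<longleftrightarrow> bij h \<and> finite {x. h x \<noteq> x}"

end

theory Submission
  imports Defs
begin

(* Every injection f is the disjoint union of its cycles (the orbit components
   cycle_of f x), and each cycle has one of three kinds: finite with n points (a
   rotation), forward (a copy of the successor on nat, starting outside the range
   of f), or open (a copy of the successor on int).

   The main theorem follows: a decomposition f = h^-1 o h2 o g o h1 o h makes f
   conjugate to a finite perturbation of g, hence approx_fin g; conversely, if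
   approx_fin f g, fusing the finitely many finite cycles whose counts differ into
   infinite cycles of f and of g produces injections of the same type, and the
   conjugating permutation yields the decomposition (with h2 = id). *)

section \<open>Cycles as orbit components\<close>

definition cycle_of :: "('a \<Rightarrow> 'a) \<Rightarrow> 'a \<Rightarrow> 'a set" where
  "cycle_of f x = {y. \<exists>m n. (f^^m) x = (f^^n) y}"

lemma funpow_add_apply: "(f^^(m+n)) x = (f^^m) ((f^^n) x)"
  by (simp add: funpow_add)

lemma cycle_of_refl [simp]: "x \<in> cycle_of f x"
  unfolding cycle_of_def by blast

lemma cycle_of_funpow [simp]: "(f^^n) x \<in> cycle_of f x"
proof -
  have "(f^^n) x = (f^^0) ((f^^n) x)" by simp
  thus ?thesis unfolding cycle_of_def by blast
qed

lemma cycle_of_sym: "y \<in> cycle_of f x \<Longrightarrow> x \<in> cycle_of f y"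
proof -
  assume "y \<in> cycle_of f x"
  then obtain m n where "(f^^m) x = (f^^n) y" unfolding cycle_of_def by blast
  hence "(f^^n) y = (f^^m) x" by simp
  thus ?thesis unfolding cycle_of_def by blast
qed

lemma cycle_of_trans:
  assumes "y \<in> cycle_of f x" and "z \<in> cycle_of f y"
  shows "z \<in> cycle_of f x"
proof -
  obtain m n p q where 1: "(f^^m) x = (f^^n) y" and 2: "(f^^p) y = (f^^q) z"
    using assms unfolding cycle_of_def by blast
  have "(f^^(p+m)) x = (f^^p) ((f^^n) y)" using 1 by (simp add: funpow_add_apply)
  also have "\<dots> = (f^^n) ((f^^p) y)" by (simp flip: funpow_add_apply add: add.commute)
  also have "\<dots> = (f^^(n+q)) z" using 2 by (simp add: funpow_add_apply)
  finally show ?thesis unfolding cycle_of_def by blast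
qed

lemma cycle_of_eq: "y \<in> cycle_of f x \<Longrightarrow> cycle_of f y = cycle_of f x"
proof
  assume y: "y \<in> cycle_of f x"
  show "cycle_of f y \<subseteq> cycle_of f x" using cycle_of_trans[OF y] by blast
  show "cycle_of f x \<subseteq> cycle_of f y" using cycle_of_trans[OF cycle_of_sym[OF y]] by blast
qed

lemma cycle_of_step [simp]: "cycle_of f (f x) = cycle_of f x"
  using cycle_of_eq cycle_of_funpow[where n=1 and f=f and x=x] by simp

lemma cycle_nonempty: "is_cycle f S \<Longrightarrow> S \<noteq> {}"
  unfolding is_cycle_def by simp

lemma cycle_closed: "is_cycle f S \<Longrightarrow> closed_under f S"
  unfolding is_cycle_def by simp

lemma closed_under_funpow: "closed_under f S \<Longrightarrow> (f^^n) y \<in> S \<longleftrightarrow> y \<in> S"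
  by (induction n) (auto simp: closed_under_def)

lemma closed_under_cycle_of: "closed_under f (cycle_of f x)"
  unfolding closed_under_def
proof (intro allI)
  fix a
  have "f a \<in> cycle_of f a" using cycle_of_funpow[where n=1 and f=f and x=a] by simp
  thus "f a \<in> cycle_of f x \<longleftrightarrow> a \<in> cycle_of f x"
    using cycle_of_eq cycle_of_sym by (metis cycle_of_step)
qed

lemma cycle_of_subset: "closed_under f S \<Longrightarrow> x \<in> S \<Longrightarrow> cycle_of f x \<subseteq> S"
proof
  fix y assume c: "closed_under f S" and x: "x \<in> S" and "y \<in> cycle_of f x"
  then obtain m n where "(f^^m) x = (f^^n) y" unfolding cycle_of_def by blast
  moreover have "(f^^m) x \<in> S" using closed_under_funpow[OF c] x by blast
  ultimately show "y \<in> S" using closed_under_funpow[OF c] by metis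
qed

lemma is_cycle_cycle_of: "is_cycle f (cycle_of f x)"
  unfolding is_cycle_def
proof (intro conjI allI impI)
  show "cycle_of f x \<noteq> {}" using cycle_of_refl[of x f] by blast
  show "closed_under f (cycle_of f x)" by (rule closed_under_cycle_of)
  fix T assume T: "T \<subset> cycle_of f x \<and> T \<noteq> {}"
  show "\<not> closed_under f T"
  proof
    assume c: "closed_under f T"
    obtain y where y: "y \<in> T" using T by blast
    have "cycle_of f y \<subseteq> T" by (rule cycle_of_subset[OF c y])
    moreover have "cycle_of f y = cycle_of f x" using T y by (intro cycle_of_eq) blast
    ultimately show False using T by blast
  qed
qed

lemma is_cycle_eq: "is_cycle f S \<Longrightarrow> x \<in> S \<Longrightarrow> S = cycle_of f x"
proof -
  assume S: "is_cycle f S" and x: "x \<in> S"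
  have sub: "cycle_of f x \<subseteq> S" by (rule cycle_of_subset[OF cycle_closed[OF S] x])
  have min: "\<And>T. T \<subset> S \<Longrightarrow> T \<noteq> {} \<Longrightarrow> \<not> closed_under f T"
    using S unfolding is_cycle_def by simp
  show "S = cycle_of f x"
  proof (rule ccontr)
    assume "S \<noteq> cycle_of f x"
    hence "cycle_of f x \<subset> S" using sub by blast
    moreover have "cycle_of f x \<noteq> {}" using cycle_of_refl[of x f] by blast
    ultimately show False using min closed_under_cycle_of[of f x] by blast
  qed
qed

lemma is_cycle_iff: "is_cycle f S \<longleftrightarrow> (\<exists>x. S = cycle_of f x)"
proof
  assume S: "is_cycle f S"
  obtain x where "x \<in> S" using cycle_nonempty[OF S] by blast
  thus "\<exists>x. S = cycle_of f x" using is_cycle_eq[OF S] by blast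
next
  assume "\<exists>x. S = cycle_of f x"
  then obtain x where "S = cycle_of f x" by blast
  thus "is_cycle f S" using is_cycle_cycle_of by simp
qed

lemma cycles_disjoint: "is_cycle f S \<Longrightarrow> is_cycle f T \<Longrightarrow> S \<inter> T \<noteq> {} \<Longrightarrow> S = T"
proof -
  assume S: "is_cycle f S" and T: "is_cycle f T" and "S \<inter> T \<noteq> {}"
  then obtain x where "x \<in> S" "x \<in> T" by blast
  thus "S = T" using is_cycle_eq[OF S \<open>x \<in> S\<close>] is_cycle_eq[OF T \<open>x \<in> T\<close>] by simp
qed

lemma closed_under_in: "closed_under f S \<Longrightarrow> x \<in> S \<Longrightarrow> (f^^i) x \<in> S"
  using closed_under_funpow[of f S i x] by simp

lemma funpow_cancel:
  assumes "inj f" "(f^^i) x = (f^^(i+d)) y" shows "x = (f^^d) y"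
proof -
  have "(f^^i) x = (f^^i) ((f^^d) y)" using assms(2) by (simp add: funpow_add_apply)
  thus ?thesis using inj_fn[OF assms(1), of i] injD by metis
qed

lemma cycle_of_cases:
  assumes f: "inj f" and y: "y \<in> cycle_of f x"
  shows "(\<exists>j. y = (f^^j) x) \<or> (\<exists>j. x = (f^^j) y)"
proof -
  obtain m n where mn: "(f^^m) x = (f^^n) y" using y unfolding cycle_of_def by blast
  show ?thesis
  proof (cases "n \<le> m")
    case True
    then obtain d where "m = n + d" using le_Suc_ex by blast
    hence "y = (f^^d) x" using funpow_cancel[OF f, of n y d x] mn by simp
    thus ?thesis by blast
  next
    case False
    then obtain d where "n = m + d" using le_Suc_ex[of m n] by auto
    hence "x = (f^^d) y" using funpow_cancel[OF f, of m x d y] mn by simp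
    thus ?thesis by blast
  qed
qed

lemma open_cycle_iff: "open_cycle f S \<longleftrightarrow> is_cycle f S \<and> infinite S \<and> S \<subseteq> range f"
  unfolding open_cycle_def forward_cycle_def by auto

lemma forward_cycle_iff: "forward_cycle f S \<longleftrightarrow> is_cycle f S \<and> infinite S \<and> \<not> S \<subseteq> range f"
  unfolding forward_cycle_def by auto

section \<open>The three shapes of a cycle\<close>

lemma orbit_collision:
  assumes f: "inj f" and eq: "(f^^i) x = (f^^j) x" and ne: "i \<noteq> j"
  shows "\<exists>d>0. d \<le> max i j \<and> (f^^d) x = x"
proof (cases "i < j")
  case True
  then obtain d where d: "j = i + d" "0 < d" using less_imp_add_positive by blast
  hence "x = (f^^d) x" using funpow_cancel[OF f, of i x d x] eq by simp
  thus ?thesis using d by (intro exI[of _ d]) auto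
next
  case False
  then obtain d where d: "i = j + d" "0 < d" using ne less_imp_add_positive[of j i] by auto
  hence "x = (f^^d) x" using funpow_cancel[OF f, of j x d x] eq by simp
  thus ?thesis using d by (intro exI[of _ d]) auto
qed

lemma periodic_cycle_of:
  assumes f: "inj f" and per: "(f^^p) z = z" and p: "0 < p"
  shows "cycle_of f z = (\<lambda>i. (f^^i) z) ` {..<p}"
proof
  show "(\<lambda>i. (f^^i) z) ` {..<p} \<subseteq> cycle_of f z" by auto
  obtain q where q: "p = Suc q" using p by (cases p) auto
  have "closed_under f ((\<lambda>i. (f^^i) z) ` {..<p})"
    unfolding closed_under_def
  proof (intro allI iffI)
    fix a assume "a \<in> (\<lambda>i. (f^^i) z) ` {..<p}"
    then obtain i where i: "i < p" "a = (f^^i) z" by blast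
    show "f a \<in> (\<lambda>i. (f^^i) z) ` {..<p}"
    proof (cases "Suc i < p")
      case True
      thus ?thesis using i by (intro image_eqI[of _ _ "Suc i"]) auto
    next
      case False
      hence "i = q" using i q by simp
      hence "f a = (f^^0) z" using i q per by simp
      thus ?thesis using p by (intro image_eqI[of _ _ 0]) auto
    qed
  next
    fix a assume "f a \<in> (\<lambda>i. (f^^i) z) ` {..<p}"
    then obtain i where i: "i < p" "f a = (f^^i) z" by blast
    obtain j where j: "j < p" "f a = f ((f^^j) z)"
    proof (cases i)
      case 0 thus ?thesis using that[of q] i q per by simp
    next
      case (Suc j) thus ?thesis using that[of j] i by simp
    qed
    hence "a = (f^^j) z" using f injD by metis
    thus "a \<in> (\<lambda>i. (f^^i) z) ` {..<p}" using j by blast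
  qed
  moreover have "z \<in> (\<lambda>i. (f^^i) z) ` {..<p}" using p by (intro image_eqI[of _ _ 0]) auto
  ultimately show "cycle_of f z \<subseteq> (\<lambda>i. (f^^i) z) ` {..<p}" by (rule cycle_of_subset)
qed

lemma infinite_cycle_aperiodic:
  assumes f: "inj f" and inf: "infinite (cycle_of f x)" and y: "y \<in> cycle_of f x" and d: "0 < d"
  shows "(f^^d) y \<noteq> y"
proof
  assume "(f^^d) y = y"
  hence "finite (cycle_of f y)" using periodic_cycle_of[OF f _ d] by simp
  thus False using inf cycle_of_eq[OF y] by simp
qed

lemma finite_cycle_enum:
  assumes f: "inj f" and fin: "finite (cycle_of f x)"
  defines "n \<equiv> card (cycle_of f x)"
  shows "0 < n" "(f^^n) x = x" "bij_betw (\<lambda>i. (f^^i) x) {..<n} (cycle_of f x)"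
proof -
  have "range (\<lambda>i. (f^^i) x) \<subseteq> cycle_of f x" by auto
  hence "finite (range (\<lambda>i. (f^^i) x))" using fin finite_subset by blast
  hence "\<not> inj (\<lambda>i. (f^^i) x)" using range_inj_infinite by blast
  then obtain i j where "(f^^i) x = (f^^j) x" "i \<noteq> j" unfolding inj_def by blast
  hence ex: "\<exists>p. 0 < p \<and> (f^^p) x = x" using orbit_collision[OF f] by blast
  define p where "p = (LEAST p. 0 < p \<and> (f^^p) x = x)"
  have p: "0 < p" "(f^^p) x = x" using LeastI_ex[OF ex] unfolding p_def by simp_all
  have pmin: "\<And>d. 0 < d \<Longrightarrow> d < p \<Longrightarrow> (f^^d) x \<noteq> x"
    unfolding p_def using not_less_Least by blast
  have inj: "inj_on (\<lambda>i. (f^^i) x) {..<p}"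
  proof (rule inj_onI, rule ccontr)
    fix i j assume ij: "i \<in> {..<p}" "j \<in> {..<p}" "(f^^i) x = (f^^j) x" "i \<noteq> j"
    then obtain d where "0 < d" "d \<le> max i j" "(f^^d) x = x" using orbit_collision[OF f] by blast
    thus False using pmin ij by fastforce
  qed
  have eq: "cycle_of f x = (\<lambda>i. (f^^i) x) ` {..<p}" using periodic_cycle_of[OF f p(2,1)] .
  have "n = p" unfolding n_def eq using card_image[OF inj] by simp
  thus "0 < n" "(f^^n) x = x" "bij_betw (\<lambda>i. (f^^i) x) {..<n} (cycle_of f x)"
    using p inj eq unfolding bij_betw_def by auto
qed

lemma finite_cycle_in_range:
  assumes f: "inj f" and fin: "finite (cycle_of f x)"
  shows "cycle_of f x \<subseteq> range f"
proof
  fix y assume "y \<in> cycle_of f x"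
  then obtain i where i: "y = (f^^i) x" using finite_cycle_enum(3)[OF f fin] unfolding bij_betw_def by auto
  obtain q where q: "card (cycle_of f x) = Suc q" using finite_cycle_enum(1)[OF f fin] by (cases "card (cycle_of f x)") auto
  have "y = (f^^(i + card (cycle_of f x))) x"
    using i finite_cycle_enum(2)[OF f fin] by (simp add: funpow_add_apply)
  thus "y \<in> range f" using q by simp
qed

lemma forward_cycle_enum:
  assumes f: "inj f" and b: "b \<notin> range f"
  shows "bij_betw (\<lambda>i. (f^^i) b) UNIV (cycle_of f b)"
proof -
  have inj: "inj (\<lambda>i. (f^^i) b)"
  proof (rule injI, rule ccontr)
    fix i j assume "(f^^i) b = (f^^j) b" "i \<noteq> j"
    then obtain d where d: "0 < d" "(f^^d) b = b" using orbit_collision[OF f] by blast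
    then obtain q where "d = Suc q" by (cases d) auto
    hence "b = f ((f^^q) b)" using d by simp
    thus False using b by blast
  qed
  have "closed_under f (range (\<lambda>i. (f^^i) b))"
    unfolding closed_under_def
  proof (intro allI iffI)
    fix a assume "a \<in> range (\<lambda>i. (f^^i) b)"
    then obtain i where "a = (f^^i) b" by blast
    hence "f a = (f^^(Suc i)) b" by simp
    thus "f a \<in> range (\<lambda>i. (f^^i) b)" by blast
  next
    fix a assume "f a \<in> range (\<lambda>i. (f^^i) b)"
    then obtain i where i: "f a = (f^^i) b" by blast
    then obtain q where "i = Suc q" using b by (cases i) auto
    hence "a = (f^^q) b" using i f injD by fastforce
    thus "a \<in> range (\<lambda>i. (f^^i) b)" by blast
  qed
  hence "cycle_of f b \<subseteq> range (\<lambda>i. (f^^i) b)" by (rule cycle_of_subset) (metis funpow_0 rangeI)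
  moreover have "range (\<lambda>i. (f^^i) b) \<subseteq> cycle_of f b" by auto
  ultimately show ?thesis using inj unfolding bij_betw_def by auto
qed

lemma forward_cycle_start_unique:
  assumes f: "inj f" and b: "b \<notin> range f" and b': "b' \<in> cycle_of f b" "b' \<notin> range f"
  shows "b' = b"
proof -
  obtain i where i: "b' = (f^^i) b"
    using forward_cycle_enum[OF f b] b'(1) unfolding bij_betw_def by auto
  thus ?thesis using b'(2) by (cases i) auto
qed

definition int_orbit :: "('a \<Rightarrow> 'a) \<Rightarrow> 'a \<Rightarrow> int \<Rightarrow> 'a" where
  "int_orbit f x i = (if 0 \<le> i then (f^^nat i) x else (inv f ^^ nat (-i)) x)"

lemma int_orbit_step:
  assumes rg: "cycle_of f x \<subseteq> range f"
  shows "int_orbit f x i \<in> cycle_of f x" "f (int_orbit f x i) = int_orbit f x (i+1)"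
proof -
  have fg: "f (inv f y) = y" if "y \<in> cycle_of f x" for y using rg that by (meson f_inv_into_f subsetD)
  have backward: "(inv f ^^ m) x \<in> cycle_of f x" for m
  proof (induction m)
    case (Suc m)
    have "f (inv f ((inv f ^^ m) x)) \<in> cycle_of f x" using fg[OF Suc] Suc by simp
    thus ?case using closed_under_cycle_of[of f x] unfolding closed_under_def by simp
  qed simp
  show P: "int_orbit f x j \<in> cycle_of f x" for j unfolding int_orbit_def using backward by auto
  consider "0 \<le> i" | "i = -1" | "i < -1" by linarith
  thus "f (int_orbit f x i) = int_orbit f x (i+1)"
  proof cases
    case 1
    hence "nat (i+1) = Suc (nat i)" by simp
    thus ?thesis using 1 unfolding int_orbit_def by simp
  next
    case 2
    thus ?thesis using fg[of x] unfolding int_orbit_def by simp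
  next
    case 3
    have "nat (-i) = Suc (nat (-(i+1)))" using 3 by simp
    hence "int_orbit f x i = inv f (int_orbit f x (i+1))" unfolding int_orbit_def using 3 by simp
    thus ?thesis using fg[OF P] by simp
  qed
qed

lemma open_cycle_enum:
  assumes f: "inj f" and inf: "infinite (cycle_of f x)" and rg: "cycle_of f x \<subseteq> range f"
  shows "\<exists>P::int \<Rightarrow> 'a. bij_betw P UNIV (cycle_of f x) \<and> (\<forall>i. f (P i) = P (i+1))"
proof -
  define P where "P = int_orbit f x"
  have Pin: "P i \<in> cycle_of f x" and Pstep: "f (P i) = P (i+1)" for i
    unfolding P_def using int_orbit_step[OF rg] by simp_all
  have Piter: "P (i + int j) = (f^^j) (P i)" for i j
  proof (induction j)
    case (Suc j)
    have "P (i + int (Suc j)) = f (P (i + int j))" using Pstep[of "i + int j"] by (simp add: algebra_simps)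
    thus ?case using Suc by simp
  qed simp
  have no_period: "P a \<noteq> P b" if "a < b" for a b
  proof -
    define d where "d = nat (b - a)"
    have "b = a + int d" "0 < d" unfolding d_def using that by auto
    thus ?thesis using Piter[of a d] infinite_cycle_aperiodic[OF f inf Pin] by metis
  qed
  have inj: "inj P"
    by (rule injI, rule ccontr) (metis linorder_neqE no_period)
  have "closed_under f (range P)"
    unfolding closed_under_def
  proof (intro allI iffI)
    fix a assume "a \<in> range P"
    thus "f a \<in> range P" using Pstep by auto
  next
    fix a assume "f a \<in> range P"
    then obtain i where "f a = P i" by blast
    hence "f a = f (P (i - 1))" using Pstep[of "i-1"] by simp
    hence "a = P (i - 1)" using f injD by metis
    thus "a \<in> range P" by blast
  qed
  moreover have "x \<in> range P" using rangeI[of P 0] unfolding P_def int_orbit_def by simp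
  ultimately have "cycle_of f x \<subseteq> range P" by (rule cycle_of_subset)
  hence "bij_betw P UNIV (cycle_of f x)" using inj Pin unfolding bij_betw_def by auto
  thus ?thesis using Pstep by blast
qed

section \<open>Classification of injections up to conjugacy\<close>

lemma transport_along_enum:
  assumes P: "bij_betw P M S" and s: "\<And>i. i \<in> M \<Longrightarrow> s i \<in> M"
    and fP: "\<And>i. i \<in> M \<Longrightarrow> f (P i) = P (s i)"
    and Q: "bij_betw Q M T" and kQ: "\<And>i. i \<in> M \<Longrightarrow> k (Q i) = Q (s i)"
  shows "\<exists>\<psi>. bij_betw \<psi> S T \<and> (\<forall>x\<in>S. \<psi> (f x) = k (\<psi> x))"
proof -
  define \<psi> where "\<psi> = Q \<circ> inv_into M P"
  have "bij_betw \<psi> S T" unfolding \<psi>_def by (rule bij_betw_trans[OF bij_betw_inv_into[OF P] Q])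
  moreover have "\<psi> (f x) = k (\<psi> x)" if x: "x \<in> S" for x
  proof -
    define i where "i = inv_into M P x"
    have i: "i \<in> M" "P i = x" unfolding i_def using x P
      by (auto simp: bij_betw_def inv_into_into f_inv_into_f)
    have "inv_into M P (f x) = s i"
      using i s fP P unfolding bij_betw_def by (metis inv_into_f_f)
    thus ?thesis unfolding \<psi>_def using i kQ i_def by simp
  qed
  ultimately show ?thesis by blast
qed

lemma periodic_step:
  assumes "(h^^n) z = z" "i < n"
  shows "h ((h^^i) z) = (h^^(Suc i mod n)) z"
proof (cases "Suc i < n")
  case False
  hence n: "Suc i = n" using assms(2) by simp
  have "h ((h^^i) z) = (h^^(Suc i)) z" by simp
  thus ?thesis using assms(1) unfolding n by simp
qed simp

lemma finite_cycles_iso: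
  assumes f: "inj f" and k: "inj k" and fx: "finite (cycle_of f x)" and ky: "finite (cycle_of k y)"
    and card: "card (cycle_of f x) = card (cycle_of k y)"
  shows "\<exists>\<psi>. bij_betw \<psi> (cycle_of f x) (cycle_of k y) \<and> (\<forall>z\<in>cycle_of f x. \<psi> (f z) = k (\<psi> z))"
proof -
  define n where "n = card (cycle_of f x)"
  note F = finite_cycle_enum[OF f fx, folded n_def]
  note K = finite_cycle_enum[OF k ky, folded card, folded n_def]
  show ?thesis
  proof (rule transport_along_enum[where s="\<lambda>i. Suc i mod n", OF F(3) _ _ K(3)])
    fix i assume "i \<in> {..<n}"
    thus "Suc i mod n \<in> {..<n}" using F(1) by simp
    show "f ((f^^i) x) = (f^^(Suc i mod n)) x" using periodic_step F(2) \<open>i \<in> {..<n}\<close> by simp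
    show "k ((k^^i) y) = (k^^(Suc i mod n)) y" using periodic_step K(2) \<open>i \<in> {..<n}\<close> by simp
  qed
qed

lemma forward_cycles_iso:
  assumes f: "inj f" and k: "inj k" and b: "b \<notin> range f" and c: "c \<notin> range k"
  shows "\<exists>\<psi>. bij_betw \<psi> (cycle_of f b) (cycle_of k c) \<and> (\<forall>z\<in>cycle_of f b. \<psi> (f z) = k (\<psi> z))"
  by (rule transport_along_enum[OF forward_cycle_enum[OF f b] _ _ forward_cycle_enum[OF k c],
        where s=Suc]) simp_all

lemma open_cycles_iso:
  assumes f: "inj f" and k: "inj k"
    and Sx: "infinite (cycle_of f x)" "cycle_of f x \<subseteq> range f"
    and Ty: "infinite (cycle_of k y)" "cycle_of k y \<subseteq> range k"
  shows "\<exists>\<psi>. bij_betw \<psi> (cycle_of f x) (cycle_of k y) \<and> (\<forall>z\<in>cycle_of f x. \<psi> (f z) = k (\<psi> z))"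
proof -
  obtain P :: "int \<Rightarrow> 'a" where P: "bij_betw P UNIV (cycle_of f x)" "\<forall>i. f (P i) = P (i+1)"
    using open_cycle_enum[OF f Sx] by blast
  obtain Q :: "int \<Rightarrow> _" where Q: "bij_betw Q UNIV (cycle_of k y)" "\<forall>i. k (Q i) = Q (i+1)"
    using open_cycle_enum[OF k Ty] by blast
  show ?thesis by (rule transport_along_enum[OF P(1) _ _ Q(1), where s="\<lambda>i. i+1"]) (simp_all add: P(2) Q(2))
qed

text \<open>The kind of a cycle: Inl n for a finite cycle with n points, Inr True for an
  open cycle, Inr False for a forward cycle.\<close>
definition cycle_kind :: "('a \<Rightarrow> 'a) \<Rightarrow> 'a set \<Rightarrow> nat + bool" where
  "cycle_kind f S = (if finite S then Inl (card S) else Inr (S \<subseteq> range f))"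

definition cycles_of_kind :: "('a \<Rightarrow> 'a) \<Rightarrow> nat + bool \<Rightarrow> 'a set set" where
  "cycles_of_kind f t = {S \<in> {S. is_cycle f S}. cycle_kind f S = t}"

lemma cycles_iso:
  assumes f: "inj f" and k: "inj k" and S: "is_cycle f S" and T: "is_cycle k T"
    and kind: "cycle_kind f S = cycle_kind k T"
  shows "\<exists>\<psi>. bij_betw \<psi> S T \<and> (\<forall>x\<in>S. \<psi> (f x) = k (\<psi> x))"
proof -
  consider (fin) "finite S" "finite T" "card S = card T"
    | (opn) "infinite S" "infinite T" "S \<subseteq> range f" "T \<subseteq> range k"
    | (fwd) "infinite S" "infinite T" "\<not> S \<subseteq> range f" "\<not> T \<subseteq> range k"
    using kind unfolding cycle_kind_def by (smt (verit) Inl_Inr_False sum.inject)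
  thus ?thesis
  proof cases
    case fin
    obtain x y where "S = cycle_of f x" "T = cycle_of k y"
      using is_cycle_iff[THEN iffD1, OF S] is_cycle_iff[THEN iffD1, OF T] by (elim exE)
    thus ?thesis using finite_cycles_iso[OF f k] fin by simp
  next
    case opn
    obtain x y where "S = cycle_of f x" "T = cycle_of k y"
      using is_cycle_iff[THEN iffD1, OF S] is_cycle_iff[THEN iffD1, OF T] by (elim exE)
    thus ?thesis using open_cycles_iso[OF f k] opn by simp
  next
    case fwd
    obtain b c where b: "b \<in> S" "b \<notin> range f" and c: "c \<in> T" "c \<notin> range k" using fwd by blast
    have "S = cycle_of f b" "T = cycle_of k c" using is_cycle_eq[OF S b(1)] is_cycle_eq[OF T c(1)] .
    thus ?thesis using forward_cycles_iso[OF f k b(2) c(2)] by simp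
  qed
qed

lemma glue_cycle_isos:
  assumes \<beta>: "bij_betw \<beta> {S. is_cycle f S} {T. is_cycle k T}"
    and \<psi>: "\<And>S. is_cycle f S \<Longrightarrow> bij_betw (\<psi> S) S (\<beta> S) \<and> (\<forall>x\<in>S. \<psi> S (f x) = k (\<psi> S x))"
  defines "h \<equiv> \<lambda>x. \<psi> (cycle_of f x) x"
  shows "bij h" "\<forall>x. h (f x) = k (h x)"
proof -
  have \<beta>c: "\<And>S. is_cycle f S \<Longrightarrow> is_cycle k (\<beta> S)" using \<beta> unfolding bij_betw_def by auto
  have hin: "h x \<in> \<beta> (cycle_of f x)" for x
  proof -
    have "bij_betw (\<psi> (cycle_of f x)) (cycle_of f x) (\<beta> (cycle_of f x))"
      using \<psi>[OF is_cycle_cycle_of] by blast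
    thus ?thesis unfolding h_def using cycle_of_refl[of x f] bij_betwE by blast
  qed
  show "\<forall>x. h (f x) = k (h x)"
    unfolding h_def using \<psi>[OF is_cycle_cycle_of] cycle_of_refl by simp
  have inj: "inj h"
  proof (rule injI)
    fix x y assume hxy: "h x = h y"
    have "\<beta> (cycle_of f x) \<inter> \<beta> (cycle_of f y) \<noteq> {}" using hin[of x] hin[of y] hxy by auto
    hence "\<beta> (cycle_of f x) = \<beta> (cycle_of f y)"
      by (rule cycles_disjoint[OF \<beta>c[OF is_cycle_cycle_of] \<beta>c[OF is_cycle_cycle_of]])
    moreover have "inj_on \<beta> {S. is_cycle f S}" using \<beta> unfolding bij_betw_def by simp
    ultimately have e: "cycle_of f x = cycle_of f y"
      using is_cycle_cycle_of unfolding inj_on_def by (metis mem_Collect_eq)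
    have "y \<in> cycle_of f x" using e by simp
    moreover have "inj_on (\<psi> (cycle_of f x)) (cycle_of f x)"
      using \<psi>[OF is_cycle_cycle_of] unfolding bij_betw_def by blast
    ultimately show "x = y" using hxy unfolding h_def e[symmetric] inj_on_def by auto
  qed
  have "y \<in> range h" for y
  proof -
    have "cycle_of k y \<in> \<beta> ` {S. is_cycle f S}"
      using \<beta> is_cycle_cycle_of[of k y] unfolding bij_betw_def by simp
    then obtain S where S: "is_cycle f S" "\<beta> S = cycle_of k y" by blast
    have "y \<in> \<psi> S ` S" using \<psi>[OF S(1)] S(2) unfolding bij_betw_def by auto
    then obtain z where z: "z \<in> S" "y = \<psi> S z" by blast
    have "S = cycle_of f z" by (rule is_cycle_eq[OF S(1) z(1)])
    hence "y = h z" unfolding h_def using z by simp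
    thus ?thesis by simp
  qed
  thus "bij h" using inj unfolding bij_def by blast
qed

lemma conjugacy_from_cycle_bij:
  fixes f k :: "'a \<Rightarrow> 'a"
  assumes f: "inj f" and k: "inj k"
    and \<beta>: "bij_betw \<beta> {S. is_cycle f S} {T. is_cycle k T}"
    and kind: "\<And>S. is_cycle f S \<Longrightarrow> cycle_kind k (\<beta> S) = cycle_kind f S"
  shows "\<exists>h. bij h \<and> (\<forall>x. h (f x) = k (h x))"
proof -
  define \<psi> where "\<psi> S = (SOME \<psi>. bij_betw \<psi> S (\<beta> S) \<and> (\<forall>x\<in>S. \<psi> (f x) = k (\<psi> x)))" for S
  have "bij_betw (\<psi> S) S (\<beta> S) \<and> (\<forall>x\<in>S. \<psi> S (f x) = k (\<psi> S x))" if S: "is_cycle f S" for S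
  proof -
    have "is_cycle k (\<beta> S)" using \<beta> S unfolding bij_betw_def by auto
    hence "\<exists>\<psi>. bij_betw \<psi> S (\<beta> S) \<and> (\<forall>x\<in>S. \<psi> (f x) = k (\<psi> x))"
      using cycles_iso[OF f k S] kind[OF S] by simp
    thus ?thesis unfolding \<psi>_def by (rule someI_ex)
  qed
  thus ?thesis using glue_cycle_isos[OF \<beta>] by blast
qed

lemma bij_glue:
  assumes "\<And>t. bij_betw (b t) {x\<in>X. c x = t} {y\<in>Y. d y = t}"
  shows "bij_betw (\<lambda>x. b (c x) x) X Y \<and> (\<forall>x\<in>X. d (b (c x) x) = c x)"
proof -
  have into: "b (c x) x \<in> Y \<and> d (b (c x) x) = c x" if "x \<in> X" for x
    using that assms[of "c x"] unfolding bij_betw_def by blast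
  have inj: "inj_on (\<lambda>x. b (c x) x) X"
  proof (rule inj_onI)
    fix x y assume xy: "x \<in> X" "y \<in> X" "b (c x) x = b (c y) y"
    hence cxy: "c x = c y" using into by metis
    have "inj_on (b (c x)) {z\<in>X. c z = c x}" using assms[of "c x"] unfolding bij_betw_def by blast
    thus "x = y" using xy cxy unfolding inj_on_def by auto
  qed
  have surj: "Y \<subseteq> (\<lambda>x. b (c x) x) ` X"
  proof
    fix y assume "y \<in> Y"
    hence "y \<in> b (d y) ` {x\<in>X. c x = d y}" using assms[of "d y"] unfolding bij_betw_def by blast
    thus "y \<in> (\<lambda>x. b (c x) x) ` X" by force
  qed
  show ?thesis using inj surj into unfolding bij_betw_def by blast
qed

lemma cycles_card_0: "cycles_card f 0 = {}"
  unfolding cycles_card_def using cycle_nonempty card_0_eq by blast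

lemma cycles_of_kind_Inl: "cycles_of_kind f (Inl n) = cycles_card f n"
  unfolding cycles_of_kind_def cycle_kind_def cycles_card_def by auto

lemma cycles_of_kind_open: "cycles_of_kind f (Inr True) = {S. open_cycle f S}"
  unfolding cycles_of_kind_def cycle_kind_def open_cycle_iff by auto

lemma cycles_of_kind_forward: "cycles_of_kind f (Inr False) = {S. forward_cycle f S}"
  unfolding cycles_of_kind_def cycle_kind_def forward_cycle_iff by auto

definition same_type :: "('a \<Rightarrow> 'a) \<Rightarrow> ('b \<Rightarrow> 'b) \<Rightarrow> bool" where
  "same_type f k \<longleftrightarrow> (\<forall>t. cycles_of_kind f t \<approx> cycles_of_kind k t)"

lemma same_type_counts:
  assumes "same_type f k"
  shows "cycles_card f n \<approx> cycles_card k n" "{S. open_cycle f S} \<approx> {S. open_cycle k S}"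
    "{S. forward_cycle f S} \<approx> {S. forward_cycle k S}"
  using assms[unfolded same_type_def, rule_format, of "Inl n"]
    assms[unfolded same_type_def, rule_format, of "Inr True"]
    assms[unfolded same_type_def, rule_format, of "Inr False"]
  by (simp_all add: cycles_of_kind_Inl cycles_of_kind_open cycles_of_kind_forward)

theorem same_type_conjugate:
  fixes f k :: "'a \<Rightarrow> 'a"
  assumes f: "inj f" and k: "inj k" and st: "same_type f k"
  shows "\<exists>h. bij h \<and> (\<forall>x. h (f x) = k (h x))"
proof -
  have "\<forall>t. \<exists>b. bij_betw b (cycles_of_kind f t) (cycles_of_kind k t)"
    using st unfolding same_type_def eqpoll_def .
  then obtain b where "\<And>t. bij_betw (b t) (cycles_of_kind f t) (cycles_of_kind k t)"
    by (metis choice)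
  hence g: "bij_betw (\<lambda>S. b (cycle_kind f S) S) {S. is_cycle f S} {T. is_cycle k T} \<and>
      (\<forall>S\<in>{S. is_cycle f S}. cycle_kind k (b (cycle_kind f S) S) = cycle_kind f S)"
    unfolding cycles_of_kind_def by (rule bij_glue)
  show ?thesis using conjugacy_from_cycle_bij[OF f k] g by blast
qed

lemma conjugate_image_cycle_of:
  assumes h: "bij h" and comm: "\<And>x. h (f x) = k (h x)"
  shows "h ` cycle_of f x = cycle_of k (h x)"
proof -
  have it: "h ((f^^n) y) = (k^^n) (h y)" for n y by (induction n) (simp_all add: comm)
  have mem: "h y \<in> cycle_of k (h x) \<longleftrightarrow> y \<in> cycle_of f x" for y
  proof -
    have "(\<exists>m n. (k^^m) (h x) = (k^^n) (h y)) \<longleftrightarrow> (\<exists>m n. (f^^m) x = (f^^n) y)"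
      using it bij_is_inj[OF h] injD by metis
    thus ?thesis unfolding cycle_of_def by simp
  qed
  show ?thesis
  proof
    show "h ` cycle_of f x \<subseteq> cycle_of k (h x)" using mem by blast
    show "cycle_of k (h x) \<subseteq> h ` cycle_of f x"
    proof
      fix z assume z: "z \<in> cycle_of k (h x)"
      obtain y where "z = h y" using bij_is_surj[OF h] by blast
      thus "z \<in> h ` cycle_of f x" using mem z by blast
    qed
  qed
qed

lemma conjugate_cycles_of_kind:
  assumes h: "bij h" and comm: "\<And>x. h (f x) = k (h x)"
  shows "bij_betw ((`) h) (cycles_of_kind f t) (cycles_of_kind k t)"
proof -
  have inj: "inj h" using h bij_is_inj by blast
  have rng: "range k = h ` range f"
  proof -
    have "range k = k ` range h" using h unfolding bij_def by simp
    also have "\<dots> = h ` range f" unfolding image_image comm[symmetric] ..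
    finally show ?thesis .
  qed
  have kind: "cycle_kind k (h ` S) = cycle_kind f S" for S
  proof -
    have ij: "inj_on h S" using inj inj_on_subset[of h UNIV S] by simp
    have "(h ` S \<subseteq> range k) = (S \<subseteq> range f)" unfolding rng using inj by (simp add: inj_image_subset_iff)
    thus ?thesis unfolding cycle_kind_def using finite_image_iff[OF ij] card_image[OF ij] by simp
  qed
  have cyc: "is_cycle k (h ` S) \<longleftrightarrow> is_cycle f S" for S
  proof
    assume "is_cycle f S"
    then obtain x where "S = cycle_of f x" unfolding is_cycle_iff by (elim exE)
    thus "is_cycle k (h ` S)" using conjugate_image_cycle_of[where f=f and k=k, OF h comm] is_cycle_cycle_of by simp
  next
    assume "is_cycle k (h ` S)"
    then obtain y where y: "h ` S = cycle_of k y" unfolding is_cycle_iff by (elim exE)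
    obtain x where "y = h x" using bij_is_surj[OF h] by blast
    hence "h ` S = h ` cycle_of f x" using y conjugate_image_cycle_of[where f=f and k=k, OF h comm] by simp
    hence "S = cycle_of f x" using inj by (simp add: inj_image_eq_iff)
    thus "is_cycle f S" using is_cycle_cycle_of by simp
  qed
  have "T \<in> (`) h ` cycles_of_kind f t" if T: "T \<in> cycles_of_kind k t" for T
  proof -
    have e: "h ` (h -` T) = T" using bij_is_surj[OF h] by (simp add: surj_image_vimage_eq)
    hence "h -` T \<in> cycles_of_kind f t"
      using T cyc[of "h -` T"] kind[of "h -` T"] unfolding cycles_of_kind_def by simp
    thus ?thesis using e by (intro image_eqI[of _ _ "h -` T"]) simp_all
  qed
  moreover have "(`) h ` cycles_of_kind f t \<subseteq> cycles_of_kind k t"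
    using cyc kind unfolding cycles_of_kind_def by auto
  moreover have "inj_on ((`) h) (cycles_of_kind f t)" using inj by (simp add: inj_on_def inj_image_eq_iff)
  ultimately show ?thesis unfolding bij_betw_def by blast
qed

lemma conjugate_same_type:
  assumes "bij h" and "\<And>x. h (f x) = k (h x)"
  shows "same_type f k"
  unfolding same_type_def eqpoll_def
  using conjugate_cycles_of_kind[where f=f and k=k, OF assms] by blast

lemma same_type_approx_fin:
  assumes st: "same_type f k" and ap: "approx_fin k g"
  shows "approx_fin f g"
proof -
  note n = same_type_counts(1)[OF st]
  have same: "cycles_card f n \<approx> cycles_card g n \<longleftrightarrow> cycles_card k n \<approx> cycles_card g n" for n
    using n[of n] eqpoll_trans eqpoll_sym by blast
  have fin: "finite (cycles_card f n) \<longleftrightarrow> finite (cycles_card k n)" for n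
    using n[of n] eqpoll_finite_iff by blast
  have bad: "{n. 0 < n \<and> \<not> (cycles_card f n \<approx> cycles_card g n)} =
      {n. 0 < n \<and> \<not> (cycles_card k n \<approx> cycles_card g n)}"
    using same by blast
  have "{S. open_cycle f S} \<approx> {S. open_cycle g S}" "{S. forward_cycle f S} \<approx> {S. forward_cycle g S}"
    using same_type_counts(2,3)[OF st] ap eqpoll_trans unfolding approx_fin_def by blast+
  moreover have "finite (cycles_card f n) \<and> finite (cycles_card g n)"
    if "0 < n" "\<not> (cycles_card f n \<approx> cycles_card g n)" for n
    using that ap same fin unfolding approx_fin_def by blast
  ultimately show ?thesis using ap unfolding approx_fin_def bad by blast
qed

section \<open>Finitely supported permutations\<close>

lemma fin_perm_id: "fin_perm id"
  unfolding fin_perm_def by simp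

lemma fin_perm_comp: "fin_perm p \<Longrightarrow> fin_perm q \<Longrightarrow> fin_perm (p \<circ> q)"
  unfolding fin_perm_def
proof (intro conjI)
  assume p: "bij p \<and> finite {x. p x \<noteq> x}" and q: "bij q \<and> finite {x. q x \<noteq> x}"
  thus "bij (p \<circ> q)" using bij_comp[of q p] by simp
  have "{x. (p \<circ> q) x \<noteq> x} \<subseteq> {x. q x \<noteq> x} \<union> {x. p x \<noteq> x}" by auto
  thus "finite {x. (p \<circ> q) x \<noteq> x}" using p q finite_subset by blast
qed

lemma fin_perm_inv: "fin_perm p \<Longrightarrow> fin_perm (inv p)"
  unfolding fin_perm_def
proof (intro conjI)
  assume p: "bij p \<and> finite {x. p x \<noteq> x}"
  thus "bij (inv p)" using bij_imp_bij_inv[of p] by simp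
  have "{x. inv p x \<noteq> x} \<subseteq> {x. p x \<noteq> x}"
  proof
    fix x assume "x \<in> {x. inv p x \<noteq> x}"
    moreover have "inv p (p x) = x" using p bij_is_inj inv_f_f by metis
    ultimately show "x \<in> {x. p x \<noteq> x}" by auto
  qed
  thus "finite {x. inv p x \<noteq> x}" using p finite_subset by blast
qed

lemma fin_perm_conj: "bij h \<Longrightarrow> fin_perm p \<Longrightarrow> fin_perm (h \<circ> p \<circ> inv h)"
  unfolding fin_perm_def
proof (intro conjI)
  assume h: "bij h" and p: "bij p \<and> finite {x. p x \<noteq> x}"
  show "bij (h \<circ> p \<circ> inv h)" using h p by (simp add: bij_comp bij_imp_bij_inv)
  have "{x. (h \<circ> p \<circ> inv h) x \<noteq> x} \<subseteq> h ` {x. p x \<noteq> x}"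
  proof
    fix x assume "x \<in> {x. (h \<circ> p \<circ> inv h) x \<noteq> x}"
    moreover have hx: "h (inv h x) = x" using h by (simp add: bij_is_surj surj_f_inv_f)
    ultimately have "p (inv h x) \<noteq> inv h x" by auto
    thus "x \<in> h ` {x. p x \<noteq> x}" using hx by (intro image_eqI[of _ _ "inv h x"]) simp_all
  qed
  thus "finite {x. (h \<circ> p \<circ> inv h) x \<noteq> x}" using p finite_subset by blast
qed

lemma perm_precompose:
  assumes g: "inj g" and p: "fin_perm p"
  shows "inj (g \<circ> p)" "range (g \<circ> p) = range g"
proof -
  have bp: "bij p" using p unfolding fin_perm_def by simp
  show "inj (g \<circ> p)" using g bij_is_inj[OF bp] inj_compose by blast
  have "range (g \<circ> p) = g ` range p" by (rule image_comp[symmetric])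
  thus "range (g \<circ> p) = range g" using bij_is_surj[OF bp] by simp
qed

section \<open>Injections that differ on a finite set\<close>

lemma closed_transfer:
  assumes agree: "\<And>x. x \<notin> D \<Longrightarrow> f x = g x" and disj: "S \<inter> (D \<union> f ` D \<union> g ` D) = {}"
    and T: "T \<subseteq> S" and c: "closed_under f T"
  shows "closed_under g T"
  unfolding closed_under_def
proof (intro allI iffI)
  fix a assume a: "a \<in> T"
  hence "a \<notin> D" using T disj by blast
  hence "g a = f a" using agree by simp
  thus "g a \<in> T" using a c unfolding closed_under_def by simp
next
  fix a assume a: "g a \<in> T"
  show "a \<in> T"
  proof (cases "a \<in> D")
    case True
    hence "g a \<in> g ` D" by simp
    thus ?thesis using a T disj by blast
  next
    case False
    hence "f a \<in> T" using a agree by simp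
    thus ?thesis using c unfolding closed_under_def by simp
  qed
qed

lemma cycle_agree_outside:
  assumes agree: "\<And>x. x \<notin> D \<Longrightarrow> f x = g x" and disj: "S \<inter> (D \<union> f ` D \<union> g ` D) = {}"
    and S: "is_cycle f S"
  shows "is_cycle g S"
proof -
  have agree': "\<And>x. x \<notin> D \<Longrightarrow> g x = f x" using agree by simp
  have disj': "S \<inter> (D \<union> g ` D \<union> f ` D) = {}" using disj by blast
  have min: "\<And>T. T \<subset> S \<Longrightarrow> T \<noteq> {} \<Longrightarrow> \<not> closed_under f T" using S unfolding is_cycle_def by simp
  have "closed_under g S" by (rule closed_transfer[OF agree disj subset_refl cycle_closed[OF S]])
  moreover have "\<not> closed_under g T" if T: "T \<subset> S" "T \<noteq> {}" for T
    using closed_transfer[OF agree' disj' psubset_imp_subset[OF T(1)]] min[OF T] by blast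
  ultimately show ?thesis using cycle_nonempty[OF S] unfolding is_cycle_def by blast
qed

lemma forward_cycles_bij:
  assumes f: "inj f"
  shows "bij_betw (cycle_of f) (- range f) {S. forward_cycle f S}"
  unfolding bij_betw_def
proof (intro conjI)
  show "inj_on (cycle_of f) (- range f)"
  proof (rule inj_onI)
    fix b b' assume b: "b \<in> - range f" "b' \<in> - range f" "cycle_of f b = cycle_of f b'"
    have "b' \<in> cycle_of f b" using b(3) by simp
    thus "b = b'" using forward_cycle_start_unique[OF f] b(1,2) by force
  qed
  show "cycle_of f ` (- range f) = {S. forward_cycle f S}"
  proof
    show "cycle_of f ` (- range f) \<subseteq> {S. forward_cycle f S}"
    proof
      fix S assume "S \<in> cycle_of f ` (- range f)"
      then obtain b where b: "b \<notin> range f" "S = cycle_of f b" by blast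
      have "infinite S" using forward_cycle_enum[OF f b(1)] b(2) bij_betw_finite by blast
      moreover have "\<not> S \<subseteq> range f" using b cycle_of_refl[of b f] by blast
      ultimately show "S \<in> {S. forward_cycle f S}" using b(2) is_cycle_cycle_of by (simp add: forward_cycle_iff)
    qed
    show "{S. forward_cycle f S} \<subseteq> cycle_of f ` (- range f)"
    proof
      fix S assume "S \<in> {S. forward_cycle f S}"
      hence S: "is_cycle f S" "\<not> S \<subseteq> range f" by (simp_all add: forward_cycle_iff)
      then obtain b where b: "b \<in> S" "b \<notin> range f" by blast
      have "S = cycle_of f b" by (rule is_cycle_eq[OF S(1) b(1)])
      thus "S \<in> cycle_of f ` (- range f)" using b(2) by simp
    qed
  qed
qed

lemma forward_cycles_eqpoll:
  assumes "inj f" "inj g" "range f = range g"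
  shows "{S. forward_cycle f S} \<approx> {S. forward_cycle g S}"
proof -
  have "- range f \<approx> {S. forward_cycle f S}" "- range g \<approx> {S. forward_cycle g S}"
    using forward_cycles_bij assms(1,2) unfolding eqpoll_def by blast+
  thus ?thesis using assms(3) eqpoll_sym eqpoll_trans by metis
qed

text \<open>A point having preimages under every power of g lies on a cycle contained in the
  range of g (a forward cycle would have a starting point without preimage).\<close>
lemma backward_orbit_in_range:
  assumes g: "inj g" and ray: "\<And>j. \<exists>y. (g^^j) y = x"
  shows "cycle_of g x \<subseteq> range g"
proof
  fix b assume b: "b \<in> cycle_of g x"
  show "b \<in> range g"
  proof (rule ccontr)
    assume nb: "b \<notin> range g"
    have "x \<in> cycle_of g b" using cycle_of_sym[OF b] .
    then obtain m where m: "x = (g^^m) b" using forward_cycle_enum[OF g nb] unfolding bij_betw_def by auto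
    obtain y where "(g^^Suc m) y = x" using ray by blast
    hence "(g^^m) (g y) = (g^^m) b" using m by (simp add: funpow_Suc_right del: funpow.simps)
    hence "g y = b" using inj_fn[OF g] injD by metis
    thus False using nb by blast
  qed
qed

text \<open>Every open cycle S of f has a backward tail that avoids the finite set D; on that
  tail f and g agree, so the tail ends at a point x whose g-cycle is open and contains
  the backward g-orbit of x inside S.\<close>
lemma open_cycle_tail:
  assumes f: "inj f" and g: "inj g" and D: "finite D" and agree: "\<And>x. x \<notin> D \<Longrightarrow> f x = g x"
    and S: "open_cycle f S"
  shows "\<exists>x\<in>S. open_cycle g (cycle_of g x) \<and> (\<forall>j. \<exists>z\<in>S. (g^^j) z = x)"
proof -
  have Sc: "is_cycle f S" "infinite S" "S \<subseteq> range f" using S by (simp_all add: open_cycle_iff)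
  obtain x where x: "S = cycle_of f x" using is_cycle_iff[THEN iffD1, OF Sc(1)] by (elim exE)
  obtain P :: "int \<Rightarrow> 'a" where P: "bij_betw P UNIV S" "\<forall>i. f (P i) = P (i+1)"
    using open_cycle_enum[OF f, of x] Sc x by blast
  have injP: "inj P" using P(1) unfolding bij_betw_def by simp
  have PS: "P i \<in> S" for i using P(1) unfolding bij_betw_def by blast
  have "bdd_below (P -` D)" using finite_vimageI[OF D injP] by (rule bdd_below_finite)
  then obtain N where N: "\<And>i. i \<in> P -` D \<Longrightarrow> N \<le> i" unfolding bdd_below_def by blast
  have out: "P i \<notin> D" if "i < N" for i using N[of i] that by force
  have ray: "(g^^j) (P (N - int j)) = P N" for j
  proof (induction j)
    case (Suc j)
    have "g (P (N - int (Suc j))) = f (P (N - int (Suc j)))" using agree out[of "N - int (Suc j)"] by simp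
    also have "\<dots> = P (N - int j)" using P(2) by (simp add: algebra_simps)
    finally show ?case using Suc by (simp add: funpow_Suc_right del: funpow.simps)
  qed simp
  define G where "G = cycle_of g (P N)"
  have rayG: "P (N - int j) \<in> G" for j
    using ray[of j] cycle_of_sym[OF cycle_of_funpow[of j g "P (N - int j)"]] unfolding G_def by simp
  have "inj (\<lambda>j::nat. P (N - int j))"
  proof (rule injI)
    fix a b :: nat assume "P (N - int a) = P (N - int b)"
    hence "N - int a = N - int b" using injP injD by metis
    thus "a = b" by simp
  qed
  hence "infinite (range (\<lambda>j::nat. P (N - int j)))" using range_inj_infinite by blast
  moreover have "range (\<lambda>j::nat. P (N - int j)) \<subseteq> G" using rayG by blast
  ultimately have Ginf: "infinite G" using finite_subset by blast
  have "G \<subseteq> range g" unfolding G_def by (rule backward_orbit_in_range[OF g]) (use ray in blast)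
  hence "open_cycle g G" using is_cycle_cycle_of Ginf unfolding G_def by (simp add: open_cycle_iff)
  moreover have "\<forall>j. \<exists>z\<in>S. (g^^j) z = P N" using ray PS by blast
  ultimately show ?thesis unfolding G_def using PS[of N] by blast
qed

text \<open>Hence, if f and g differ only on a finite set, f has at most as many open cycles
  as g: each open cycle of f is sent to the open g-cycle containing its tail.\<close>
lemma open_cycles_lepoll:
  fixes f g :: "'a \<Rightarrow> 'a"
  assumes f: "inj f" and g: "inj g" and D: "finite D" and agree: "\<And>x. x \<notin> D \<Longrightarrow> f x = g x"
  shows "{S. open_cycle f S} \<lesssim> {S. open_cycle g S}"
proof -
  define R where "R G S \<longleftrightarrow> (\<exists>x\<in>S. x \<in> G \<and> (\<forall>j. \<exists>z\<in>S. (g^^j) z = x))" for G S :: "'a set"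
  show ?thesis
  proof (rule lepoll_relational_full[where R=R])
    fix S assume "S \<in> {S. open_cycle f S}"
    then obtain x where "x \<in> S" "open_cycle g (cycle_of g x)" "\<forall>j. \<exists>z\<in>S. (g^^j) z = x"
      using open_cycle_tail[OF f g D agree] by blast
    hence "cycle_of g x \<in> {S. open_cycle g S} \<and> R (cycle_of g x) S"
      unfolding R_def using cycle_of_refl[of x g] by blast
    thus "\<exists>G. G \<in> {S. open_cycle g S} \<and> R G S" by blast
  next
    fix G S S' assume G: "G \<in> {S. open_cycle g S}" and S: "S \<in> {S. open_cycle f S}"
      and S': "S' \<in> {S. open_cycle f S}" and RS: "R G S" and RS': "R G S'"
    have Gc: "is_cycle g G" using G by (simp add: open_cycle_iff)
    obtain x where x: "x \<in> S" "x \<in> G" "\<And>j. \<exists>z\<in>S. (g^^j) z = x" using RS unfolding R_def by blast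
    obtain x' where x': "x' \<in> S'" "x' \<in> G" "\<And>j. \<exists>z\<in>S'. (g^^j) z = x'" using RS' unfolding R_def by blast
    have "x' \<in> cycle_of g x" using x'(2) is_cycle_eq[OF Gc x(2)] by simp
    hence "(\<exists>j. x' = (g^^j) x) \<or> (\<exists>j. x = (g^^j) x')" by (rule cycle_of_cases[OF g])
    hence "S \<inter> S' \<noteq> {}"
    proof
      assume "\<exists>j. x' = (g^^j) x"
      then obtain j where j: "x' = (g^^j) x" by blast
      obtain z where z: "z \<in> S'" "(g^^j) z = x'" using x'(3) by blast
      have "z = x" using z j inj_fn[OF g] injD by metis
      thus ?thesis using z x by blast
    next
      assume "\<exists>j. x = (g^^j) x'"
      then obtain j where j: "x = (g^^j) x'" by blast
      obtain z where z: "z \<in> S" "(g^^j) z = x" using x(3) by blast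
      have "z = x'" using z j inj_fn[OF g] injD by metis
      thus ?thesis using z x' by blast
    qed
    moreover have "is_cycle f S" "is_cycle f S'" using S S' by (simp_all add: open_cycle_iff)
    ultimately show "S = S'" using cycles_disjoint by blast
  qed
qed

lemma countable_cycles:
  assumes "countable (UNIV :: 'a set)"
  shows "countable {S. is_cycle (f :: 'a \<Rightarrow> 'a) S}"
proof -
  have "{S. is_cycle f S} \<subseteq> range (cycle_of f)"
  proof
    fix S assume "S \<in> {S. is_cycle f S}"
    then obtain x where "S = cycle_of f x" using is_cycle_iff[THEN iffD1] by blast
    thus "S \<in> range (cycle_of f)" by simp
  qed
  moreover have "countable (range (cycle_of f))" using assms by simp
  ultimately show ?thesis using countable_subset by blast
qed

lemma eqpoll_or_finite:
  assumes "X = A \<union> B1" "Y = A \<union> B2" "finite B1" "finite B2" "countable X" "countable Y"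
  shows "X \<approx> Y \<or> (finite X \<and> finite Y)"
proof (cases "finite A")
  case False
  hence "infinite X" "infinite Y" using assms(1,2) by auto
  hence "X \<approx> (UNIV :: nat set)" "Y \<approx> (UNIV :: nat set)"
    using to_nat_on_infinite[OF assms(5)] to_nat_on_infinite[OF assms(6)] unfolding eqpoll_def by blast+
  thus ?thesis using eqpoll_sym[of Y] eqpoll_trans[of X] by blast
qed (use assms in simp)

lemma cycles_card_local_change:
  fixes f g :: "'a \<Rightarrow> 'a"
  assumes cnt: "countable (UNIV :: 'a set)" and E: "finite E"
    and far: "\<And>n. {S\<in>cycles_card f n. S \<inter> E = {}} = {S\<in>cycles_card g n. S \<inter> E = {}}"
  shows "finite {n. 0 < n \<and> \<not> (cycles_card f n \<approx> cycles_card g n)}"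
    and "\<And>n. \<not> (cycles_card f n \<approx> cycles_card g n) \<Longrightarrow> finite (cycles_card f n) \<and> finite (cycles_card g n)"
proof -
  have near: "{S\<in>cycles_card h n. S \<inter> E \<noteq> {}} \<subseteq> cycle_of h ` E" for h :: "'a \<Rightarrow> 'a" and n
  proof
    fix S assume "S \<in> {S\<in>cycles_card h n. S \<inter> E \<noteq> {}}"
    then obtain e where S: "is_cycle h S" and e: "e \<in> S" "e \<in> E" unfolding cycles_card_def by blast
    have "S = cycle_of h e" by (rule is_cycle_eq[OF S e(1)])
    thus "S \<in> cycle_of h ` E" using e(2) by simp
  qed
  have nearfin: "finite {S\<in>cycles_card h n. S \<inter> E \<noteq> {}}" for h :: "'a \<Rightarrow> 'a" and n
    using finite_subset[OF near finite_imageI[OF E]] .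
  have split: "cycles_card h n = {S\<in>cycles_card h n. S \<inter> E = {}} \<union> {S\<in>cycles_card h n. S \<inter> E \<noteq> {}}"
    for h :: "'a \<Rightarrow> 'a" and n by blast
  have cntc: "countable (cycles_card h n)" for h :: "'a \<Rightarrow> 'a" and n
  proof -
    have "cycles_card h n \<subseteq> {S. is_cycle h S}" unfolding cycles_card_def by blast
    thus ?thesis using countable_cycles[OF cnt, of h] countable_subset by blast
  qed
  show "finite (cycles_card f n) \<and> finite (cycles_card g n)" if "\<not> (cycles_card f n \<approx> cycles_card g n)" for n
  proof -
    have "cycles_card g n = {S\<in>cycles_card f n. S \<inter> E = {}} \<union> {S\<in>cycles_card g n. S \<inter> E \<noteq> {}}"
      unfolding far by (rule split)
    thus ?thesis using eqpoll_or_finite[OF split[of f n] _ nearfin nearfin cntc cntc] that by blast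
  qed
  have "{n. 0 < n \<and> \<not> (cycles_card f n \<approx> cycles_card g n)} \<subseteq> card ` (cycle_of f ` E) \<union> card ` (cycle_of g ` E)"
  proof
    fix n assume "n \<in> {n. 0 < n \<and> \<not> (cycles_card f n \<approx> cycles_card g n)}"
    hence "cycles_card f n \<noteq> cycles_card g n" by auto
    hence "{S\<in>cycles_card f n. S \<inter> E \<noteq> {}} \<noteq> {} \<or> {S\<in>cycles_card g n. S \<inter> E \<noteq> {}} \<noteq> {}"
      using split[of f n] split[of g n] far[of n] by auto
    then obtain h S where "h = f \<or> h = g" "S \<in> {S\<in>cycles_card h n. S \<inter> E \<noteq> {}}" by blast
    moreover from this have "S \<in> cycle_of h ` E" using near by blast
    ultimately show "n \<in> card ` (cycle_of f ` E) \<union> card ` (cycle_of g ` E)"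
      unfolding cycles_card_def by auto
  qed
  thus "finite {n. 0 < n \<and> \<not> (cycles_card f n \<approx> cycles_card g n)}"
    using finite_subset E by blast
qed

lemma perturb_approx_fin:
  fixes g p :: "'a \<Rightarrow> 'a"
  assumes cnt: "countable (UNIV :: 'a set)" and g: "inj g" and p: "fin_perm p"
  shows "approx_fin (g \<circ> p) g"
proof -
  define f where "f = g \<circ> p"
  define D where "D = {x. p x \<noteq> x}"
  have D: "finite D" using p unfolding fin_perm_def D_def by simp
  have agree: "\<And>x. x \<notin> D \<Longrightarrow> f x = g x" unfolding f_def D_def by simp
  have f: "inj f" "range f = range g" unfolding f_def using perm_precompose[OF g p] by simp_all
  define E where "E = D \<union> f ` D \<union> g ` D"
  have E: "finite E" unfolding E_def using D by simp
  have far: "{S\<in>cycles_card f n. S \<inter> E = {}} = {S\<in>cycles_card g n. S \<inter> E = {}}" for n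
    using cycle_agree_outside[OF agree] cycle_agree_outside[of D g f] agree
    unfolding cycles_card_def E_def by (auto simp: Un_ac)
  have "{S. open_cycle f S} \<approx> {S. open_cycle g S}"
    using open_cycles_lepoll[OF f(1) g D agree] open_cycles_lepoll[OF g f(1) D] agree
    by (metis lepoll_antisym)
  moreover have "{S. forward_cycle f S} \<approx> {S. forward_cycle g S}"
    by (rule forward_cycles_eqpoll[OF f(1) g f(2)])
  ultimately show ?thesis
    using cycles_card_local_change[OF cnt E far] unfolding approx_fin_def f_def by blast
qed

section \<open>Merging finite cycles into another cycle\<close>

lemma agree_funpow:
  assumes agree: "\<And>x. x \<notin> D \<Longrightarrow> F x = f x" and avoid: "\<And>l. l < i \<Longrightarrow> (f^^l) y \<notin> D"
  shows "(F^^i) y = (f^^i) y"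
  using avoid
proof (induction i)
  case (Suc i)
  hence "(F^^i) y = (f^^i) y" "(f^^i) y \<notin> D" by simp_all
  thus ?case using agree by simp
qed simp

lemma closed_transfer_containing:
  assumes agree: "\<And>x. x \<notin> D \<Longrightarrow> F x = f x" and D: "D \<subseteq> W" "f ` D \<subseteq> W"
    and W: "closed_under F W"
  shows "closed_under f W"
  unfolding closed_under_def
proof
  fix a show "f a \<in> W \<longleftrightarrow> a \<in> W"
  proof (cases "a \<in> D")
    case True thus ?thesis using D by blast
  next
    case False
    hence "F a = f a" by (rule agree)
    thus ?thesis using W unfolding closed_under_def by metis
  qed
qed

lemma closed_under_Un: "closed_under f A \<Longrightarrow> closed_under f B \<Longrightarrow> closed_under f (A \<union> B)"
  unfolding closed_under_def by blast

lemma cycles_local_change: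
  assumes agree: "\<And>x. x \<notin> D \<Longrightarrow> F x = f x" and U: "is_cycle F U"
    and DU: "D \<union> f ` D \<union> F ` D \<subseteq> U"
  shows "{S. is_cycle F S} = insert U {S. is_cycle f S \<and> S \<inter> U = {}}"
proof (intro equalityI subsetI)
  fix S assume "S \<in> {S. is_cycle F S}"
  hence S: "is_cycle F S" by simp
  show "S \<in> insert U {S. is_cycle f S \<and> S \<inter> U = {}}"
  proof (cases "S \<inter> U = {}")
    case True
    hence disj: "S \<inter> (D \<union> F ` D \<union> f ` D) = {}" using DU by blast
    have "is_cycle f S" by (rule cycle_agree_outside[OF agree disj S])
    thus ?thesis using True by simp
  next
    case False thus ?thesis using cycles_disjoint[OF S U] by simp
  qed
next
  fix S assume S: "S \<in> insert U {S. is_cycle f S \<and> S \<inter> U = {}}"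
  show "S \<in> {S. is_cycle F S}"
  proof (cases "S = U")
    case False
    hence Sc: "is_cycle f S" "S \<inter> U = {}" using S by simp_all
    hence "S \<inter> (D \<union> f ` D \<union> F ` D) = {}" using DU by blast
    thus ?thesis using cycle_agree_outside[of D f F] agree Sc(1) by (metis mem_Collect_eq)
  qed (use U in simp)
qed

text \<open>If F sends c to f z and otherwise agrees with f away from c and a point z of a
  finite cycle Z not containing c, then F runs once around Z from c back to z.\<close>
lemma swap_walks_around_cycle:
  assumes f: "inj f" and Z: "is_cycle f Z" "finite Z" and z: "z \<in> Z" and c: "c \<notin> Z"
    and agree: "\<And>x. x \<notin> {c, z} \<Longrightarrow> F x = f x" and Fc: "F c = f z"
  shows "z \<in> cycle_of F c"
proof -
  have Zz: "Z = cycle_of f z" by (rule is_cycle_eq[OF Z(1) z])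
  define n where "n = card Z"
  have n0: "0 < n" and zn: "(f^^n) z = z" and enum: "inj_on (\<lambda>i. (f^^i) z) {..<n}"
    using finite_cycle_enum[OF f Z(2)[unfolded Zz]] unfolding n_def Zz bij_betw_def by simp_all
  obtain m where m: "n = Suc m" using n0 by (cases n) auto
  have "(F^^m) (f z) = (f^^m) (f z)"
  proof (rule agree_funpow[OF agree])
    fix l assume "l < m"
    have e: "(f^^l) (f z) = (f^^(Suc l)) z" by (simp add: funpow_swap1)
    have "(f^^(Suc l)) z \<noteq> (f^^0) z" using inj_onD[OF enum] \<open>l < m\<close> m by fastforce
    moreover have "(f^^(Suc l)) z \<in> Z" using closed_under_in[OF cycle_closed[OF Z(1)] z] .
    ultimately show "(f^^l) (f z) \<notin> {c, z}" unfolding e using c by auto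
  qed
  also have "\<dots> = z" using zn m by (simp add: funpow_swap1)
  finally have "(F^^(Suc m)) c = z" using Fc by (simp add: funpow_Suc_right del: funpow.simps)
  thus ?thesis using cycle_of_funpow[of "Suc m" F c] by simp
qed

text \<open>Swapping a point c of a cycle C with a point z of a different, finite cycle Z
  fuses the two into one cycle C \<union> Z of the new map F: the F-cycle of c reaches z, so it
  contains c, z and their f-images and is therefore f-invariant, while C \<union> Z is
  F-invariant for the same reason.\<close>
lemma swap_fuses_cycles:
  fixes f :: "'a \<Rightarrow> 'a"
  assumes f: "inj f" and C: "is_cycle f C" and Z: "is_cycle f Z" "finite Z" and CZ: "C \<noteq> Z"
    and c: "c \<in> C" and z: "z \<in> Z"
  defines "F \<equiv> f \<circ> id(c := z, z := c)"
  shows "is_cycle F (C \<union> Z)"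
proof -
  have disj: "C \<inter> Z = {}" using cycles_disjoint[OF C Z(1)] CZ by blast
  hence cz: "c \<noteq> z" using c z by blast
  have Fc: "F c = f z" and Fz: "F z = f c" unfolding F_def using cz by simp_all
  have agree: "\<And>x. x \<notin> {c, z} \<Longrightarrow> F x = f x" unfolding F_def by simp
  have agree': "\<And>x. x \<notin> {c, z} \<Longrightarrow> f x = F x" using agree by simp
  have zW: "z \<in> cycle_of F c"
    using swap_walks_around_cycle[OF f Z z _ agree Fc] disj c by blast
  have FcW: "F c \<in> cycle_of F c" using cycle_of_funpow[of 1 F c] by simp
  have FzW: "F z \<in> cycle_of F c"
    using closed_under_in[OF closed_under_cycle_of zW, of 1] by simp
  have fC: "f c \<in> C" and fZ: "f z \<in> Z"
    using closed_under_in[OF cycle_closed[OF C] c, of 1] closed_under_in[OF cycle_closed[OF Z(1)] z, of 1]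
    by simp_all
  have DW: "{c, z} \<subseteq> cycle_of F c" "f ` {c, z} \<subseteq> cycle_of F c" using zW FcW FzW Fc Fz by auto
  have "closed_under f (cycle_of F c)"
    by (rule closed_transfer_containing[OF agree DW closed_under_cycle_of])
  hence "cycle_of f c \<subseteq> cycle_of F c" "cycle_of f z \<subseteq> cycle_of F c"
    using cycle_of_subset[of f "cycle_of F c"] zW cycle_of_refl[of c F] by simp_all
  hence CZW: "C \<union> Z \<subseteq> cycle_of F c"
    unfolding is_cycle_eq[OF C c, symmetric] is_cycle_eq[OF Z(1) z, symmetric] by simp
  have DCZ: "{c, z} \<subseteq> C \<union> Z" "F ` {c, z} \<subseteq> C \<union> Z" using c z fC fZ Fc Fz by auto
  have "closed_under F (C \<union> Z)"
    by (rule closed_transfer_containing[OF agree' DCZ closed_under_Un[OF cycle_closed[OF C] cycle_closed[OF Z(1)]]])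
  hence "cycle_of F c \<subseteq> C \<union> Z" using c by (intro cycle_of_subset) simp_all
  hence "cycle_of F c = C \<union> Z" using CZW by (rule antisym)
  thus ?thesis using is_cycle_cycle_of[of F c] by simp
qed

lemma merge_cycles:
  fixes f :: "'a \<Rightarrow> 'a"
  assumes f: "inj f" and C: "is_cycle f C" and Z: "is_cycle f Z" "finite Z" and CZ: "C \<noteq> Z"
    and c: "c \<in> C" and z: "z \<in> Z"
  defines "F \<equiv> f \<circ> id(c := z, z := c)"
  shows "{S. is_cycle F S} = insert (C \<union> Z) ({S. is_cycle f S} - {C, Z})"
proof -
  have agree: "\<And>x. x \<notin> {c, z} \<Longrightarrow> F x = f x" unfolding F_def by simp
  have U: "is_cycle F (C \<union> Z)" unfolding F_def by (rule swap_fuses_cycles[OF f C Z CZ c z])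
  have "f ` {c, z} \<subseteq> C \<union> Z" "F ` {c, z} \<subseteq> C \<union> Z"
    using closed_under_in[OF cycle_closed[OF C] c, of 1] closed_under_in[OF cycle_closed[OF Z(1)] z, of 1]
    unfolding F_def by auto
  hence DU: "{c, z} \<union> f ` {c, z} \<union> F ` {c, z} \<subseteq> C \<union> Z" using c z by blast
  have "{S. is_cycle F S} = insert (C \<union> Z) {S. is_cycle f S \<and> S \<inter> (C \<union> Z) = {}}"
    by (rule cycles_local_change[OF agree U DU])
  also have "{S. is_cycle f S \<and> S \<inter> (C \<union> Z) = {}} = {S. is_cycle f S} - {C, Z}"
  proof (intro equalityI subsetI)
    fix S assume "S \<in> {S. is_cycle f S \<and> S \<inter> (C \<union> Z) = {}}"
    thus "S \<in> {S. is_cycle f S} - {C, Z}" using c z by auto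
  next
    fix S assume S: "S \<in> {S. is_cycle f S} - {C, Z}"
    hence "S \<inter> C = {}" "S \<inter> Z = {}" using cycles_disjoint[OF _ C] cycles_disjoint[OF _ Z(1)] by blast+
    thus "S \<in> {S. is_cycle f S \<and> S \<inter> (C \<union> Z) = {}}" using S by blast
  qed
  finally show ?thesis .
qed

lemma merge_finite_cycles:
  fixes f :: "'a \<Rightarrow> 'a"
  assumes f: "inj f" and C: "is_cycle f C" "infinite C" and fin: "finite \<Z>"
    and Zs: "\<forall>Z\<in>\<Z>. is_cycle f Z \<and> finite Z"
  shows "\<exists>p. fin_perm p \<and> {S. is_cycle (f \<circ> p) S} = insert (C \<union> \<Union>\<Z>) ({S. is_cycle f S} - {C} - \<Z>)"
  using fin Zs
proof (induction rule: finite_induct)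
  case empty
  have "{S. is_cycle (f \<circ> id) S} = insert (C \<union> \<Union>{}) ({S. is_cycle f S} - {C} - {})" using C by auto
  thus ?case using fin_perm_id by blast
next
  case (insert Z \<Z>)
  have Z: "is_cycle f Z" "finite Z" using insert.prems by simp_all
  obtain p where p: "fin_perm p"
    and cyc: "{S. is_cycle (f \<circ> p) S} = insert (C \<union> \<Union>\<Z>) ({S. is_cycle f S} - {C} - \<Z>)"
    using insert.IH insert.prems by blast
  define C' where "C' = C \<union> \<Union>\<Z>"
  have ZC: "Z \<noteq> C" using Z C by auto
  have C'c: "is_cycle (f \<circ> p) C'" using cyc unfolding C'_def by blast
  have Zc: "is_cycle (f \<circ> p) Z" using cyc Z(1) ZC insert.hyps(2) by blast
  have C'A: "C' \<notin> {S. is_cycle f S} - {C} - \<Z>"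
    using cycles_disjoint[OF C(1)] cycle_nonempty[OF C(1)] unfolding C'_def by blast
  obtain c z where c: "c \<in> C'" and z: "z \<in> Z" using cycle_nonempty[OF C(1)] cycle_nonempty[OF Z(1)]
    unfolding C'_def by blast
  define t where "t = id(c := z, z := c)"
  have t: "fin_perm t"
  proof -
    have "{x. t x \<noteq> x} \<subseteq> {c, z}" unfolding t_def by auto
    moreover have "bij t" unfolding t_def by (rule involuntory_imp_bij) simp
    ultimately show ?thesis unfolding fin_perm_def using finite_subset by blast
  qed
  have "{S. is_cycle (f \<circ> (p \<circ> t)) S} = insert (C' \<union> Z) ({S. is_cycle (f \<circ> p) S} - {C', Z})"
    unfolding t_def comp_assoc[symmetric]
    by (rule merge_cycles[OF perm_precompose(1)[OF f p] C'c Zc Z(2) _ c z])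
       (use C'c Z C infinite_super[of C C'] in \<open>auto simp: C'_def\<close>)
  also have "\<dots> = insert (C \<union> \<Union>(insert Z \<Z>)) ({S. is_cycle f S} - {C} - insert Z \<Z>)"
    using cyc C'A unfolding C'_def by auto
  finally show ?case using fin_perm_comp[OF p t] by blast
qed

lemma kinds_after_merge:
  fixes f f1 :: "'a \<Rightarrow> 'a"
  assumes f: "inj f" and rng: "range f1 = range f" and C: "is_cycle f C" "infinite C"
    and Zs: "\<forall>Z\<in>\<Z>. is_cycle f Z \<and> finite Z"
    and cyc: "{S. is_cycle f1 S} = insert (C \<union> \<Union>\<Z>) ({S. is_cycle f S} - {C} - \<Z>)"
  shows "cycles_of_kind f1 t =
    (if cycle_kind f C = t then insert (C \<union> \<Union>\<Z>) else id) (cycles_of_kind f t - {C} - \<Z>)"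
proof -
  have "\<Union>\<Z> \<subseteq> range f"
  proof
    fix x assume "x \<in> \<Union>\<Z>"
    then obtain Z where Z: "Z \<in> \<Z>" "x \<in> Z" by blast
    have Zc: "is_cycle f Z" "finite Z" using Zs Z(1) by simp_all
    moreover have "Z = cycle_of f x" by (rule is_cycle_eq[OF Zc(1) Z(2)])
    ultimately show "x \<in> range f" using finite_cycle_in_range[OF f, of x] Z(2) by blast
  qed
  hence kind: "cycle_kind f1 (C \<union> \<Union>\<Z>) = cycle_kind f C"
    using C(2) unfolding cycle_kind_def rng by auto
  have same: "cycle_kind f1 S = cycle_kind f S" for S unfolding cycle_kind_def rng ..
  define A where "A = {S. is_cycle f S} - {C} - \<Z>"
  have "{S \<in> insert (C \<union> \<Union>\<Z>) A. cycle_kind f1 S = t} =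
      (if cycle_kind f C = t then insert (C \<union> \<Union>\<Z>) else id) {S \<in> A. cycle_kind f S = t}"
    using kind same by auto
  moreover have "{S \<in> A. cycle_kind f S = t} = cycles_of_kind f t - {C} - \<Z>"
    unfolding A_def cycles_of_kind_def by blast
  ultimately show ?thesis unfolding cycles_of_kind_def cyc A_def by simp
qed

lemma replace_eqpoll:
  assumes "a \<in> X" "b \<notin> X - {a}"
  shows "insert b (X - {a}) \<approx> X"
proof -
  have "insert b (X - {a}) \<approx> insert a (X - {a})" using assms by (intro insert_eqpoll_cong) simp_all
  also have "insert a (X - {a}) = X" using assms(1) by blast
  finally show ?thesis .
qed

lemma remove_finite_cycles:
  fixes f :: "'a \<Rightarrow> 'a"
  assumes f: "inj f" and C: "is_cycle f C" "infinite C" and N: "finite N"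
    and Nfin: "\<forall>n\<in>N. finite (cycles_card f n)"
  shows "\<exists>p. fin_perm p \<and>
    (\<forall>t. cycles_of_kind (f \<circ> p) t \<approx> (if t \<in> Inl ` N then {} else cycles_of_kind f t))"
proof -
  define \<Z> where "\<Z> = (\<Union>n\<in>N. cycles_card f n)"
  have fin: "finite \<Z>" unfolding \<Z>_def using N Nfin by blast
  have Zs: "\<forall>Z\<in>\<Z>. is_cycle f Z \<and> finite Z" unfolding \<Z>_def cycles_card_def by blast
  obtain p where p: "fin_perm p"
    and cyc: "{S. is_cycle (f \<circ> p) S} = insert (C \<union> \<Union>\<Z>) ({S. is_cycle f S} - {C} - \<Z>)"
    using merge_finite_cycles[OF f C fin Zs] by blast
  note kinds = kinds_after_merge[OF f perm_precompose(2)[OF f p] C Zs cyc]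
  have kind_Z: "S \<in> \<Z> \<longleftrightarrow> (\<exists>n\<in>N. S \<in> cycles_of_kind f (Inl n))" for S
    unfolding \<Z>_def cycles_of_kind_Inl by blast
  have "cycles_of_kind (f \<circ> p) t \<approx> (if t \<in> Inl ` N then {} else cycles_of_kind f t)" for t
  proof (cases "t \<in> Inl ` N")
    case True
    have "cycle_kind f C \<noteq> t" using C(2) True unfolding cycle_kind_def by auto
    moreover have "cycles_of_kind f t - {C} - \<Z> = {}" using True kind_Z by blast
    ultimately show ?thesis using kinds True by simp
  next
    case False
    have "cycles_of_kind f t \<inter> \<Z> = {}"
      using False kind_Z unfolding cycles_of_kind_def by blast
    hence X: "cycles_of_kind f t - {C} - \<Z> = cycles_of_kind f t - {C}" by blast
    show ?thesis
    proof (cases "cycle_kind f C = t")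
      case True
      hence "C \<in> cycles_of_kind f t" using C(1) unfolding cycles_of_kind_def by simp
      moreover have "C \<union> \<Union>\<Z> \<notin> cycles_of_kind f t - {C}"
        using cycles_disjoint[OF C(1)] cycle_nonempty[OF C(1)] unfolding cycles_of_kind_def by blast
      ultimately show ?thesis using kinds True False X replace_eqpoll by simp
    next
      case kindC: False
      hence "C \<notin> cycles_of_kind f t" unfolding cycles_of_kind_def by simp
      thus ?thesis using kinds kindC False X by simp
    qed
  qed
  thus ?thesis using p by blast
qed

section \<open>The main theorem\<close>

lemma approx_fin_kinds:
  assumes ap: "approx_fin f g"
    and t: "t \<notin> Inl ` {n. 0 < n \<and> \<not> (cycles_card f n \<approx> cycles_card g n)}"
  shows "cycles_of_kind f t \<approx> cycles_of_kind g t"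
proof (cases t)
  case (Inl n) thus ?thesis using t by (cases n) (auto simp: cycles_of_kind_Inl cycles_card_0)
next
  case (Inr b) thus ?thesis using ap unfolding approx_fin_def
    by (cases b) (simp_all add: cycles_of_kind_open cycles_of_kind_forward)
qed

lemma conjugate_perturbations_decompose:
  assumes h: "bij h" and p: "fin_perm p" and comm: "\<And>x. h (f (p x)) = g (q (h x))"
  shows "f = inv h \<circ> g \<circ> (q \<circ> (h \<circ> inv p \<circ> inv h)) \<circ> h"
proof
  fix x
  have hh: "inv h (h y) = y" for y using bij_is_inj[OF h] by simp
  have pp: "p (inv p y) = y" for y using p unfolding fin_perm_def by (simp add: bij_is_surj surj_f_inv_f)
  have "(inv h \<circ> g \<circ> (q \<circ> (h \<circ> inv p \<circ> inv h)) \<circ> h) x = inv h (g (q (h (inv p x))))"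
    by (simp add: hh)
  also have "\<dots> = f (p (inv p x))" using comm hh by metis
  finally show "f x = (inv h \<circ> g \<circ> (q \<circ> (h \<circ> inv p \<circ> inv h)) \<circ> h) x" using pp by simp
qed

text \<open>approx_fin implies the decomposition: removing the finitely many finite cycles
  whose counts differ (by merging them into an infinite cycle) makes f and g of the
  same type, hence conjugate.\<close>
lemma approx_fin_imp_decomposition:
  fixes f g :: "'a \<Rightarrow> 'a"
  assumes f: "inj f" and g: "inj g" and C: "is_cycle f C" "infinite C"
    and D: "is_cycle g D" "infinite D" and ap: "approx_fin f g"
  shows "\<exists>h h1. bij h \<and> fin_perm h1 \<and> f = inv h \<circ> g \<circ> h1 \<circ> h"
proof -
  define N where "N = {n::nat. 0 < n \<and> \<not> (cycles_card f n \<approx> cycles_card g n)}"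
  have N: "finite N" "\<forall>n\<in>N. finite (cycles_card f n)" "\<forall>n\<in>N. finite (cycles_card g n)"
    using ap unfolding approx_fin_def N_def by blast+
  obtain p where p: "fin_perm p"
    and pk: "\<And>t. cycles_of_kind (f \<circ> p) t \<approx> (if t \<in> Inl ` N then {} else cycles_of_kind f t)"
    using remove_finite_cycles[OF f C N(1,2)] by blast
  obtain q where q: "fin_perm q"
    and qk: "\<And>t. cycles_of_kind (g \<circ> q) t \<approx> (if t \<in> Inl ` N then {} else cycles_of_kind g t)"
    using remove_finite_cycles[OF g D N(1,3)] by blast
  have "cycles_of_kind (f \<circ> p) t \<approx> cycles_of_kind (g \<circ> q) t" for t
  proof -
    have "(if t \<in> Inl ` N then {} else cycles_of_kind f t) \<approx> (if t \<in> Inl ` N then {} else cycles_of_kind g t)"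
      using approx_fin_kinds[OF ap, of t] unfolding N_def by simp
    thus ?thesis using pk[of t] qk[of t] eqpoll_sym eqpoll_trans by metis
  qed
  hence "same_type (f \<circ> p) (g \<circ> q)" unfolding same_type_def by blast
  then obtain h where h: "bij h" "\<forall>x. h ((f \<circ> p) x) = (g \<circ> q) (h x)"
    using same_type_conjugate[OF perm_precompose(1)[OF f p] perm_precompose(1)[OF g q]] by blast
  have "f = inv h \<circ> g \<circ> (q \<circ> (h \<circ> inv p \<circ> inv h)) \<circ> h"
    by (rule conjugate_perturbations_decompose[OF h(1) p]) (use h(2) in simp)
  moreover have "fin_perm (q \<circ> (h \<circ> inv p \<circ> inv h))"
    by (rule fin_perm_comp[OF q fin_perm_conj[OF h(1) fin_perm_inv[OF p]]])
  ultimately show ?thesis using h(1) by blast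
qed

text \<open>Conversely, a decomposition makes f conjugate to a finite perturbation of g.\<close>
lemma decomposition_imp_approx_fin:
  assumes cnt: "countable (UNIV :: 'a set)" and g: "inj (g :: 'a \<Rightarrow> 'a)"
    and h: "bij h" and h1: "fin_perm h1" and h2: "fin_perm h2"
    and f: "f = inv h \<circ> h2 \<circ> g \<circ> h1 \<circ> h"
  shows "approx_fin f g"
proof -
  have bh2: "bij h2" using h2 unfolding fin_perm_def by simp
  define H where "H = inv h2 \<circ> h"
  have "bij H" unfolding H_def using bij_comp[OF h bij_imp_bij_inv[OF bh2]] by simp
  moreover have "H (f x) = (g \<circ> (h1 \<circ> h2)) (H x)" for x
    unfolding H_def f using surj_f_inv_f[OF bij_is_surj[OF h]] inv_f_f[OF bij_is_inj[OF bh2]]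
      surj_f_inv_f[OF bij_is_surj[OF bh2]] by simp
  ultimately have "same_type f (g \<circ> (h1 \<circ> h2))"
    by (rule conjugate_same_type[where k="g \<circ> (h1 \<circ> h2)"])
  moreover have "approx_fin (g \<circ> (h1 \<circ> h2)) g"
    by (rule perturb_approx_fin[OF cnt g fin_perm_comp[OF h1 h2]])
  ultimately show ?thesis by (rule same_type_approx_fin)
qed

theorem mainTheorem11:
  fixes f g :: "'a \<Rightarrow> 'a"
  assumes "countable (UNIV :: 'a set)" and "infinite (UNIV :: 'a set)"
    and "inj f" and "inj g"
    and "\<exists>S. is_cycle f S \<and> infinite S"
    and "\<exists>S. is_cycle g S \<and> infinite S"
  shows "approx_fin f g \<longleftrightarrow>
    (\<exists>h h1 h2. bij h \<and> fin_perm h1 \<and> fin_perm h2 \<and>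
       f = inv h \<circ> h2 \<circ> g \<circ> h1 \<circ> h)"
proof
  assume ap: "approx_fin f g"
  obtain C D where "is_cycle f C" "infinite C" "is_cycle g D" "infinite D" using assms(5,6) by blast
  then obtain h h1 where "bij h" "fin_perm h1" "f = inv h \<circ> g \<circ> h1 \<circ> h"
    using approx_fin_imp_decomposition[OF assms(3,4) _ _ _ _ ap] by blast
  thus "\<exists>h h1 h2. bij h \<and> fin_perm h1 \<and> fin_perm h2 \<and> f = inv h \<circ> h2 \<circ> g \<circ> h1 \<circ> h"
    using fin_perm_id by (intro exI[of _ h] exI[of _ h1] exI[of _ id]) simp
next
  assume "\<exists>h h1 h2. bij h \<and> fin_perm h1 \<and> fin_perm h2 \<and> f = inv h \<circ> h2 \<circ> g \<circ> h1 \<circ> h"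
  thus "approx_fin f g" using decomposition_imp_approx_fin[OF assms(1,4)] by blast
qed

end
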